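(* Let $C=(C_{i,i'})_{1\le i,i'\le l}$ be a symmetric matrix. For all $m\in\mathbb Z_{\ge0}^l$, $$I_{C,m}(q,z)=\sum_{a\in\mathbb Z^l,\ 0\le a\le m}\frac{z^a q^{W_{C,a}}}{(q)_{m-a}}\,I_{C,a}(q,z),$$ where $0\le a\le m$ means $0\le a_i\le m_i$ for all $i$. Moreover, the solution of this recursion is unique once $I_{C,0}(q,z)=1$ is fixed.
   Context: Let $(q)_n=\prod_{k=1}^n(1-q^k)$ and, for $n\in\mathbb Z^l_{\ge0}$, $(q)_n=\prod_i(q)_{n_i}$; $z^a=\prod_i z_i^{a_i}$; $W_{C,a}=\frac12\big(\sum_{i,i'}C_{i,i'}a_ia_{i'}-\sum_iC_{i,i}a_i\big)$. Powers $q^{c}$ with $c$ a linear combination of entries of $C$ are treated as formal symbols with $q^aq^b=q^{a+b}$. For $m=(m_1,\dots,m_l)\in\mathbb Z^l_{\ge0}$ define the formal power series in $z=(z_1,\dots,z_l)$ $$I_{C,m}(q,z)=\sum_{\mathbf m}\prod_{i=1}^l z_i^{\sum_{t\ge0}t m_{i,t}}\frac{q^{Q_C(\mathbf m)}}{\prod_{i,t}(q)_{m_{i,t}}},$$ the sum over all tuples $\mathbf m=(m_{i,t})_{1\le i\le l,\ t\ge0}$ of nonnegative integers with $\sum_{t\ge0}m_{i,t}=m_i$ for each $i$, where $Q_C(\mathbf m)=\frac12\sum_{i,i'}\sum_{t,t'\ge0}C_{i,i'}\min(t,t')m_{i,t}m_{i',t'}-\frac12\sum_i\sum_{t\ge0}C_{i,i}\,t\,m_{i,t}$.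 *)

theory Defs
  imports Complex_Main
begin

text \<open>Index set {1..l} is modelled by a finite type 'n. Multi-indices are functions 'n => nat.
  A formal power series in z = (z_i) with real coefficients is represented by its coefficient
  function (('n => nat) => real): F N is the coefficient of z^N.\<close>

type_synonym 'n zseries = "('n \<Rightarrow> nat) \<Rightarrow> real"

definition qpoch :: "real \<Rightarrow> nat \<Rightarrow> real" where
  "qpoch q n = (\<Prod>k=1..n. 1 - q ^ k)"

definition qpochv :: "real \<Rightarrow> ('n::finite \<Rightarrow> nat) \<Rightarrow> real" where
  "qpochv q n = (\<Prod>i\<in>UNIV. qpoch q (n i))"

definition W :: "('n::finite \<Rightarrow> 'n \<Rightarrow> real) \<Rightarrow> ('n \<Rightarrow> nat) \<Rightarrow> real" where
  "W C a = ((\<Sum>i\<in>UNIV. \<Sum>i'\<in>UNIV. C i i' * real (a i) * real (a i'))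
            - (\<Sum>i\<in>UNIV. C i i * real (a i))) / 2"

definition supp_t :: "('n \<Rightarrow> nat \<Rightarrow> nat) \<Rightarrow> 'n \<Rightarrow> nat set" where
  "supp_t mm i = {t. mm i t \<noteq> 0}"

definition QC :: "('n::finite \<Rightarrow> 'n \<Rightarrow> real) \<Rightarrow> ('n \<Rightarrow> nat \<Rightarrow> nat) \<Rightarrow> real" where
  "QC C mm = ((\<Sum>i\<in>UNIV. \<Sum>i'\<in>UNIV. \<Sum>t\<in>supp_t mm i. \<Sum>t'\<in>supp_t mm i'.
                  C i i' * real (min t t') * real (mm i t) * real (mm i' t'))
             - (\<Sum>i\<in>UNIV. \<Sum>t\<in>supp_t mm i. C i i * real t * real (mm i t))) / 2"

text \<open>The tuples mm contributing to the coefficient of z^N in I_{C,m}: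
  sum_t m_{i,t} = m_i and sum_t t m_{i,t} = N_i. (The vanishing for t > N_i is implied
  by the second condition; it only makes the sums finite.)\<close>
definition tuples :: "('n::finite \<Rightarrow> nat) \<Rightarrow> ('n \<Rightarrow> nat) \<Rightarrow> ('n \<Rightarrow> nat \<Rightarrow> nat) set" where
  "tuples m N = {mm. (\<forall>i t. N i < t \<longrightarrow> mm i t = 0)
                     \<and> (\<forall>i. (\<Sum>t\<le>N i. mm i t) = m i)
                     \<and> (\<forall>i. (\<Sum>t\<le>N i. t * mm i t) = N i)}"

definition Iser :: "('n::finite \<Rightarrow> 'n \<Rightarrow> real) \<Rightarrow> real \<Rightarrow> ('n \<Rightarrow> nat) \<Rightarrow> 'n zseries" where
  "Iser C q m = (\<lambda>N. \<Sum>mm\<in>tuples m N.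
      q powr (QC C mm) / (\<Prod>i\<in>UNIV. \<Prod>t\<in>supp_t mm i. qpoch q (mm i t)))"

text \<open>Multiplication of a series by the monomial z^a.\<close>
definition zshift :: "('n \<Rightarrow> nat) \<Rightarrow> 'n zseries \<Rightarrow> 'n zseries" where
  "zshift a F = (\<lambda>N. if (\<forall>i. a i \<le> N i) then F (\<lambda>i. N i - a i) else 0)"

definition zone :: "'n zseries" where
  "zone = (\<lambda>N. if N = (\<lambda>_. 0) then 1 else 0)"

definition rec_rhs :: "('n::finite \<Rightarrow> 'n \<Rightarrow> real) \<Rightarrow> real \<Rightarrow> (('n \<Rightarrow> nat) \<Rightarrow> 'n zseries)
                       \<Rightarrow> ('n \<Rightarrow> nat) \<Rightarrow> 'n zseries" where
  "rec_rhs C q J m = (\<lambda>N. \<Sum>a\<in>{a. \<forall>i. a i \<le> m i}.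
      q powr (W C a) / qpochv q (\<lambda>i. m i - a i) * zshift a (J a) N)"

end

theory Submission
  imports Defs "HOL-Library.FuncSet"
begin

text \<open>Split off the parts with t = 0 of a tuple (m_{i,t}) contributing to I_{C,m}: if
  m_{i,0} = m_i - a_i, the remaining parts shifted down, (m_{i,t+1}), form a tuple contributing
  to I_{C,a}, and this is a bijection. The shift lowers every min(t,t') and every t by one; since
  sum_t m_{i,t+1} = a_i, Q_C drops by exactly W_{C,a} and the z-degree by a, while the denominator
  loses the factor (q)_{m-a}. Uniqueness holds because every term with a nonzero on the right-hand
  side only involves coefficients of strictly lower total z-degree.\<close>

definition tuples_trunc :: "nat \<Rightarrow> ('n::finite \<Rightarrow> nat) \<Rightarrow> ('n \<Rightarrow> nat) \<Rightarrow> ('n \<Rightarrow> nat \<Rightarrow> nat) set" where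
  "tuples_trunc K m N = {mm. (\<forall>i t. K \<le> t \<longrightarrow> mm i t = 0)
                            \<and> (\<forall>i. (\<Sum>t<K. mm i t) = m i) \<and> (\<forall>i. (\<Sum>t<K. t * mm i t) = N i)}"

lemma sum_lessThan_vanishing:
  fixes f :: "nat \<Rightarrow> 'a::comm_monoid_add"
  assumes "\<And>t. n < t \<Longrightarrow> f t = 0" "n < K"
  shows "(\<Sum>t<K. f t) = (\<Sum>t\<le>n. f t)"
  using assms by (intro sum.mono_neutral_right) auto

lemma index_le_weighted_sum:
  fixes mm :: "nat \<Rightarrow> nat"
  assumes "(\<Sum>t<K. t * mm t) = n" "mm t \<noteq> 0" "t < K"
  shows "t \<le> n"
proof -
  have "t \<le> t * mm t" using assms(2) by (cases "mm t") auto
  also have "\<dots> \<le> (\<Sum>t<K. t * mm t)" using assms(3) by (intro member_le_sum) auto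
  finally show ?thesis using assms(1) by simp
qed

lemma tuples_eq_tuples_trunc:
  assumes "\<And>i. N i < K"
  shows "tuples m N = tuples_trunc K m N"
proof -
  have sums_eq: "(\<Sum>t<K. mm i t) = (\<Sum>t\<le>N i. mm i t)"
      "(\<Sum>t<K. t * mm i t) = (\<Sum>t\<le>N i. t * mm i t)"
    if "\<And>t. N i < t \<Longrightarrow> mm i t = 0" for mm :: "'a \<Rightarrow> nat \<Rightarrow> nat" and i
    using that assms[of i] by (auto intro: sum_lessThan_vanishing)
  show ?thesis
  proof (intro set_eqI iffI)
    fix mm assume mm: "mm \<in> tuples m N"
    then have "mm i t = 0" if "K \<le> t" for i t
      using assms[of i] that by (auto simp: tuples_def)
    with mm show "mm \<in> tuples_trunc K m N"
      using sums_eq[of _ mm] by (auto simp: tuples_def tuples_trunc_def)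
  next
    fix mm assume mm: "mm \<in> tuples_trunc K m N"
    then have "mm i t = 0" if "N i < t" for i t
      using index_le_weighted_sum[of "mm i" K "N i" t] that by (force simp: tuples_trunc_def)
    with mm show "mm \<in> tuples m N"
      using sums_eq[of _ mm] by (auto simp: tuples_def tuples_trunc_def)
  qed
qed

lemma finite_tuples_trunc: "finite (tuples_trunc K m N)"
proof -
  define extend where "extend f = (\<lambda>i t. if t < K then f i t else 0)" for f :: "'a \<Rightarrow> nat \<Rightarrow> nat"
  have "tuples_trunc K m N \<subseteq> extend ` (\<Pi>\<^sub>E i\<in>UNIV. \<Pi>\<^sub>E t\<in>{..<K}. {..m i})"
  proof
    fix mm assume mm: "mm \<in> tuples_trunc K m N"
    have "mm i t \<le> m i" if "t < K" for i t
    proof -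
      have "mm i t \<le> (\<Sum>t<K. mm i t)" using that by (intro member_le_sum) auto
      with mm show ?thesis by (simp add: tuples_trunc_def)
    qed
    moreover have "mm = extend (\<lambda>i. restrict (mm i) {..<K})"
      using mm by (auto simp: extend_def tuples_trunc_def fun_eq_iff not_less)
    ultimately show "mm \<in> extend ` (\<Pi>\<^sub>E i\<in>UNIV. \<Pi>\<^sub>E t\<in>{..<K}. {..m i})"
      by (auto simp: PiE_UNIV_domain)
  qed
  then show ?thesis by (rule finite_surj[rotated]) (auto intro: finite_PiE)
qed

lemma finite_pointwise_le: "finite {a::'n::finite \<Rightarrow> nat. \<forall>i. a i \<le> m i}"
proof -
  have "{a::'n \<Rightarrow> nat. \<forall>i. a i \<le> m i} = (\<Pi>\<^sub>E i\<in>UNIV. {..m i})"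
    by (auto simp: PiE_UNIV_domain)
  then show ?thesis by (simp add: finite_PiE)
qed

definition Iser_term :: "('n::finite \<Rightarrow> 'n \<Rightarrow> real) \<Rightarrow> real \<Rightarrow> ('n \<Rightarrow> nat \<Rightarrow> nat) \<Rightarrow> real" where
  "Iser_term C q mm = q powr QC C mm / (\<Prod>i\<in>UNIV. \<Prod>t\<in>supp_t mm i. qpoch q (mm i t))"

lemma Iser_eq_sum_tuples_trunc:
  assumes "\<And>i. N i < K"
  shows "Iser C q m N = sum (Iser_term C q) (tuples_trunc K m N)"
  by (simp add: Iser_def Iser_term_def tuples_eq_tuples_trunc[OF assms])

lemma sum_supp_t_eq_lessThan:
  assumes "\<And>t. K \<le> t \<Longrightarrow> mm i t = 0" "\<And>t. mm i t = 0 \<Longrightarrow> g t = 0"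
  shows "(\<Sum>t\<in>supp_t mm i. g t) = (\<Sum>t<K. g t)"
proof (rule sum.mono_neutral_left)
  show "supp_t mm i \<subseteq> {..<K}" using assms(1) by (auto simp: supp_t_def) (metis not_le less_irrefl)
qed (use assms(2) in \<open>auto simp: supp_t_def\<close>)

lemma prod_supp_t_eq_lessThan:
  assumes "\<And>t. K \<le> t \<Longrightarrow> mm i t = 0" "\<And>t. mm i t = 0 \<Longrightarrow> g t = 1"
  shows "(\<Prod>t\<in>supp_t mm i. g t) = (\<Prod>t<K. g t)"
proof (rule prod.mono_neutral_left)
  show "supp_t mm i \<subseteq> {..<K}" using assms(1) by (auto simp: supp_t_def) (metis not_le less_irrefl)
qed (use assms(2) in \<open>auto simp: supp_t_def\<close>)

definition QC_trunc :: "nat \<Rightarrow> ('n::finite \<Rightarrow> 'n \<Rightarrow> real) \<Rightarrow> ('n \<Rightarrow> nat \<Rightarrow> nat) \<Rightarrow> real" where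
  "QC_trunc K C mm = ((\<Sum>i\<in>UNIV. \<Sum>i'\<in>UNIV. C i i' *
        (\<Sum>t<K. \<Sum>t'<K. real (min t t') * real (mm i t) * real (mm i' t')))
      - (\<Sum>i\<in>UNIV. C i i * (\<Sum>t<K. real t * real (mm i t)))) / 2"

lemma QC_eq_QC_trunc:
  assumes "\<And>i t. K \<le> t \<Longrightarrow> mm i t = 0"
  shows "QC C mm = QC_trunc K C mm"
proof -
  have quadratic: "(\<Sum>t\<in>supp_t mm i. \<Sum>t'\<in>supp_t mm i'. C i i' * real (min t t') * real (mm i t) * real (mm i' t'))
     = C i i' * (\<Sum>t<K. \<Sum>t'<K. real (min t t') * real (mm i t) * real (mm i' t'))" for i i'
  proof -
    have "(\<Sum>t\<in>supp_t mm i. \<Sum>t'\<in>supp_t mm i'. C i i' * real (min t t') * real (mm i t) * real (mm i' t'))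
       = (\<Sum>t\<in>supp_t mm i. \<Sum>t'<K. C i i' * real (min t t') * real (mm i t) * real (mm i' t'))"
      using assms by (intro sum.cong refl sum_supp_t_eq_lessThan) auto
    also have "\<dots> = (\<Sum>t<K. \<Sum>t'<K. C i i' * real (min t t') * real (mm i t) * real (mm i' t'))"
      using assms by (intro sum_supp_t_eq_lessThan) auto
    finally show ?thesis by (simp add: sum_distrib_left mult.assoc)
  qed
  have linear: "(\<Sum>t\<in>supp_t mm i. C i i * real t * real (mm i t))
     = C i i * (\<Sum>t<K. real t * real (mm i t))" for i
  proof -
    have "(\<Sum>t\<in>supp_t mm i. C i i * real t * real (mm i t)) = (\<Sum>t<K. C i i * real t * real (mm i t))"
      using assms by (intro sum_supp_t_eq_lessThan) auto
    then show ?thesis by (simp add: sum_distrib_left mult.assoc)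
  qed
  show ?thesis unfolding QC_def QC_trunc_def quadratic linear ..
qed

definition tuple_cons :: "('n \<Rightarrow> nat) \<Rightarrow> ('n \<Rightarrow> nat \<Rightarrow> nat) \<Rightarrow> 'n \<Rightarrow> nat \<Rightarrow> nat" where
  "tuple_cons h mm = (\<lambda>i t. case t of 0 \<Rightarrow> h i | Suc s \<Rightarrow> mm i s)"

definition tuple_tail :: "('n \<Rightarrow> nat \<Rightarrow> nat) \<Rightarrow> 'n \<Rightarrow> nat \<Rightarrow> nat" where
  "tuple_tail mm = (\<lambda>i s. mm i (Suc s))"

lemma tuple_cons_tail [simp]: "tuple_cons (\<lambda>i. mm i 0) (tuple_tail mm) = mm"
  by (auto simp: tuple_cons_def tuple_tail_def fun_eq_iff split: nat.split)

lemma tuple_tail_cons [simp]: "tuple_tail (tuple_cons h mm) = mm"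
  by (simp add: tuple_cons_def tuple_tail_def)

lemma tuple_cons_zero [simp]: "tuple_cons h mm i 0 = h i"
  by (simp add: tuple_cons_def)

lemma tuple_cons_vanishing:
  assumes "\<And>i t. K \<le> t \<Longrightarrow> mm i t = 0"
  shows "\<And>i t. Suc K \<le> t \<Longrightarrow> tuple_cons h mm i t = 0"
  using assms by (auto simp: tuple_cons_def split: nat.split)

lemma sum_min_lessThan_Suc_shift:
  fixes f g :: "nat \<Rightarrow> nat"
  shows "(\<Sum>t<Suc K. \<Sum>t'<Suc K. real (min t t') * real (f t) * real (g t'))
   = (\<Sum>s<K. \<Sum>s'<K. real (min s s') * real (f (Suc s)) * real (g (Suc s')))
     + (\<Sum>s<K. real (f (Suc s))) * (\<Sum>s'<K. real (g (Suc s')))"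
proof -
  have "(\<Sum>t<Suc K. \<Sum>t'<Suc K. real (min t t') * real (f t) * real (g t'))
      = (\<Sum>s<K. \<Sum>s'<K. (real (min s s') + 1) * real (f (Suc s)) * real (g (Suc s')))"
    unfolding sum.lessThan_Suc_shift by (simp add: add.commute)
  also have "\<dots> = (\<Sum>s<K. \<Sum>s'<K. real (min s s') * real (f (Suc s)) * real (g (Suc s')))
     + (\<Sum>s<K. real (f (Suc s))) * (\<Sum>s'<K. real (g (Suc s')))"
    by (simp add: algebra_simps sum.distrib sum_distrib_left sum_distrib_right) (rule sum.swap)
  finally show ?thesis .
qed

lemma sum_weighted_lessThan_Suc_shift:
  fixes f :: "nat \<Rightarrow> nat"
  shows "(\<Sum>t<Suc K. real t * real (f t))
   = (\<Sum>s<K. real s * real (f (Suc s))) + (\<Sum>s<K. real (f (Suc s)))"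
  unfolding sum.lessThan_Suc_shift by (simp add: sum.distrib algebra_simps)

lemma QC_trunc_tuple_cons:
  "QC_trunc (Suc K) C (tuple_cons h mm) = W C (\<lambda>i. \<Sum>t<K. mm i t) + QC_trunc K C mm"
  unfolding QC_trunc_def W_def sum_min_lessThan_Suc_shift sum_weighted_lessThan_Suc_shift
  by (simp add: tuple_cons_def distrib_left sum.distrib field_simps)

lemma prod_qpoch_tuple_cons:
  assumes "\<And>i t. K \<le> t \<Longrightarrow> mm i t = 0"
  shows "(\<Prod>i\<in>UNIV. \<Prod>t\<in>supp_t (tuple_cons h mm) i. qpoch q (tuple_cons h mm i t))
       = qpochv q h * (\<Prod>i\<in>UNIV. \<Prod>t\<in>supp_t mm i. qpoch q (mm i t))"
proof -
  have "(\<Prod>t\<in>supp_t (tuple_cons h mm) i. qpoch q (tuple_cons h mm i t))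
      = qpoch q (h i) * (\<Prod>t\<in>supp_t mm i. qpoch q (mm i t))" for i
  proof -
    have "(\<Prod>t\<in>supp_t (tuple_cons h mm) i. qpoch q (tuple_cons h mm i t))
        = (\<Prod>t<Suc K. qpoch q (tuple_cons h mm i t))"
      using tuple_cons_vanishing[OF assms] by (intro prod_supp_t_eq_lessThan) (auto simp: qpoch_def)
    also have "\<dots> = qpoch q (h i) * (\<Prod>t<K. qpoch q (mm i t))"
      unfolding prod.lessThan_Suc_shift by (simp add: tuple_cons_def)
    also have "(\<Prod>t<K. qpoch q (mm i t)) = (\<Prod>t\<in>supp_t mm i. qpoch q (mm i t))"
      using assms by (intro prod_supp_t_eq_lessThan[symmetric]) (auto simp: qpoch_def)
    finally show ?thesis .
  qed
  then show ?thesis by (simp add: qpochv_def prod.distrib)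
qed

lemma Iser_term_tuple_cons:
  assumes "\<And>i t. K \<le> t \<Longrightarrow> mm i t = 0"
  shows "Iser_term C q (tuple_cons h mm)
       = q powr W C (\<lambda>i. \<Sum>t<K. mm i t) / qpochv q h * Iser_term C q mm"
proof -
  have "QC C (tuple_cons h mm) = W C (\<lambda>i. \<Sum>t<K. mm i t) + QC C mm"
    by (simp add: QC_eq_QC_trunc[OF tuple_cons_vanishing[OF assms]] QC_eq_QC_trunc[OF assms]
        QC_trunc_tuple_cons)
  then show ?thesis
    by (simp add: Iser_term_def prod_qpoch_tuple_cons[OF assms] powr_add)
qed

lemma tuple_cons_in_tuples_trunc_iff:
  "tuple_cons h mm \<in> tuples_trunc (Suc K) m N \<longleftrightarrow>
     (\<forall>i t. K \<le> t \<longrightarrow> mm i t = 0) \<and> (\<forall>i. h i + (\<Sum>t<K. mm i t) = m i)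
     \<and> (\<forall>i. (\<Sum>t<K. mm i t) + (\<Sum>t<K. t * mm i t) = N i)"
proof -
  have "(\<forall>i t. Suc K \<le> t \<longrightarrow> tuple_cons h mm i t = 0) \<longleftrightarrow> (\<forall>i t. K \<le> t \<longrightarrow> mm i t = 0)"
    by (auto simp: tuple_cons_def split: nat.split)
  moreover have "(\<Sum>t<Suc K. tuple_cons h mm i t) = h i + (\<Sum>t<K. mm i t)" for i
    unfolding sum.lessThan_Suc_shift by (simp add: tuple_cons_def)
  moreover have "(\<Sum>t<Suc K. t * tuple_cons h mm i t) = (\<Sum>t<K. mm i t) + (\<Sum>t<K. t * mm i t)" for i
    unfolding sum.lessThan_Suc_shift by (simp add: tuple_cons_def sum.distrib)
  ultimately show ?thesis by (simp add: tuples_trunc_def)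
qed

lemma bij_betw_tuple_cons:
  "bij_betw (\<lambda>(a, mm). tuple_cons (\<lambda>i. m i - a i) mm)
     (SIGMA a:{a. \<forall>i. a i \<le> m i \<and> a i \<le> N i}. tuples_trunc K a (\<lambda>i. N i - a i))
     (tuples_trunc (Suc K) m N)"
proof (rule bij_betw_byWitness[where f' = "\<lambda>mm. (\<lambda>i. m i - mm i 0, tuple_tail mm)"]; safe)
  fix a mm
  assume a: "\<forall>i. a i \<le> m i \<and> a i \<le> N i" and mm: "mm \<in> tuples_trunc K a (\<lambda>i. N i - a i)"
  show "(\<lambda>i. m i - tuple_cons (\<lambda>i. m i - a i) mm i 0) = a"
    using a by (simp add: fun_eq_iff)
  show "tuple_cons (\<lambda>i. m i - a i) mm \<in> tuples_trunc (Suc K) m N"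
    using a mm unfolding tuple_cons_in_tuples_trunc_iff by (simp add: tuples_trunc_def)
next
  fix mm assume "mm \<in> tuples_trunc (Suc K) m N"
  then have "tuple_cons (\<lambda>i. mm i 0) (tuple_tail mm) \<in> tuples_trunc (Suc K) m N" by simp
  then have vanishing: "\<forall>i t. K \<le> t \<longrightarrow> tuple_tail mm i t = 0"
    and head: "\<And>i. mm i 0 + (\<Sum>t<K. tuple_tail mm i t) = m i"
    and weight: "\<And>i. (\<Sum>t<K. tuple_tail mm i t) + (\<Sum>t<K. t * tuple_tail mm i t) = N i"
    unfolding tuple_cons_in_tuples_trunc_iff by auto
  have tail_size: "m i - mm i 0 = (\<Sum>t<K. tuple_tail mm i t)" for i
    using head[of i] by linarith
  have "m i - (m i - mm i 0) = mm i 0" for i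
    using head[of i] by linarith
  then show "tuple_cons (\<lambda>i. m i - (m i - mm i 0)) (tuple_tail mm) = mm"
    by simp
  show "m i - mm i 0 \<le> N i" for i
    using weight[of i] unfolding tail_size by simp
  have "(\<Sum>t<K. t * tuple_tail mm i t) = N i - (m i - mm i 0)" for i
    using weight[of i] unfolding tail_size by simp
  with vanishing show "tuple_tail mm \<in> tuples_trunc K (\<lambda>i. m i - mm i 0) (\<lambda>i. N i - (m i - mm i 0))"
    unfolding tuples_trunc_def tail_size by blast
qed simp_all

lemma rec_rhs_eq_sum_below:
  "rec_rhs C q J m N = (\<Sum>a\<in>{a. \<forall>i. a i \<le> m i \<and> a i \<le> N i}.
      q powr W C a / qpochv q (\<lambda>i. m i - a i) * J a (\<lambda>i. N i - a i))"
proof -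
  have "rec_rhs C q J m N = (\<Sum>a\<in>{a. \<forall>i. a i \<le> m i}. if \<forall>i. a i \<le> N i
      then q powr W C a / qpochv q (\<lambda>i. m i - a i) * J a (\<lambda>i. N i - a i) else 0)"
    unfolding rec_rhs_def zshift_def by (intro sum.cong) auto
  also have "\<dots> = (\<Sum>a\<in>{a \<in> {a. \<forall>i. a i \<le> m i}. \<forall>i. a i \<le> N i}.
      q powr W C a / qpochv q (\<lambda>i. m i - a i) * J a (\<lambda>i. N i - a i))"
    by (rule sum.inter_filter[symmetric, OF finite_pointwise_le])
  also have "{a \<in> {a. \<forall>i. a i \<le> m i}. \<forall>i. a i \<le> N i} = {a. \<forall>i. a i \<le> m i \<and> a i \<le> N i}"
    by auto
  finally show ?thesis .
qed

lemma Iser_coeff_eq_rec_rhs: "Iser C q m N = rec_rhs C q (Iser C q) m N"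
proof -
  \<comment> \<open>Tuples for m are truncated at Suc K, their tails at K; both horizons exceed every N i.\<close>
  define K where "K = Suc (\<Sum>i\<in>UNIV. N i)"
  have N_less_K: "N i < K" for i
    using member_le_sum[of i UNIV N] by (simp add: K_def)
  define B where "B = {a. \<forall>i. a i \<le> m i \<and> a i \<le> N i}"
  have "Iser C q m N = sum (Iser_term C q) (tuples_trunc (Suc K) m N)"
    using N_less_K less_SucI by (intro Iser_eq_sum_tuples_trunc) blast
  also have "\<dots> = (\<Sum>(a, mm)\<in>(SIGMA a:B. tuples_trunc K a (\<lambda>i. N i - a i)).
                     Iser_term C q (tuple_cons (\<lambda>i. m i - a i) mm))"
    unfolding B_def
    by (subst sum.reindex_bij_betw[OF bij_betw_tuple_cons, symmetric]) (simp add: case_prod_unfold)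
  also have "\<dots> = (\<Sum>a\<in>B. \<Sum>mm\<in>tuples_trunc K a (\<lambda>i. N i - a i).
                     Iser_term C q (tuple_cons (\<lambda>i. m i - a i) mm))"
    by (rule sum.Sigma[symmetric])
      (auto simp: B_def finite_tuples_trunc intro: finite_subset[OF _ finite_pointwise_le])
  also have "\<dots> = (\<Sum>a\<in>B. q powr W C a / qpochv q (\<lambda>i. m i - a i) * Iser C q a (\<lambda>i. N i - a i))"
  proof (rule sum.cong[OF refl])
    fix a assume "a \<in> B"
    have "Iser_term C q (tuple_cons (\<lambda>i. m i - a i) mm)
        = q powr W C a / qpochv q (\<lambda>i. m i - a i) * Iser_term C q mm"
      if "mm \<in> tuples_trunc K a (\<lambda>i. N i - a i)" for mm
      using that Iser_term_tuple_cons[of K mm C q] by (auto simp: tuples_trunc_def)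
    moreover have "Iser C q a (\<lambda>i. N i - a i) = sum (Iser_term C q) (tuples_trunc K a (\<lambda>i. N i - a i))"
      using N_less_K le_less_trans[OF diff_le_self] by (intro Iser_eq_sum_tuples_trunc) blast
    ultimately show "(\<Sum>mm\<in>tuples_trunc K a (\<lambda>i. N i - a i). Iser_term C q (tuple_cons (\<lambda>i. m i - a i) mm))
        = q powr W C a / qpochv q (\<lambda>i. m i - a i) * Iser C q a (\<lambda>i. N i - a i)"
      by (simp add: sum_distrib_left)
  qed
  also have "\<dots> = rec_rhs C q (Iser C q) m N"
    by (simp add: rec_rhs_eq_sum_below B_def)
  finally show ?thesis .
qed

lemma tuples_zero: "tuples (\<lambda>_. 0) N = (if N = (\<lambda>_. 0) then {\<lambda>_ _. 0} else {})"
proof (cases "N = (\<lambda>_. 0)")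
  case True
  then show ?thesis by (auto simp: tuples_def fun_eq_iff) (metis not_gr0)
next
  case False
  then show ?thesis by (auto simp: tuples_def)
qed

lemma Iser_zero:
  assumes "q \<noteq> 0"
  shows "Iser C q (\<lambda>_. 0) = zone"
  using assms by (simp add: fun_eq_iff Iser_def tuples_zero zone_def QC_def supp_t_def)

lemma rec_rhs_solution_unique:
  assumes "J (\<lambda>_. 0) = J' (\<lambda>_. 0)"
    and J: "\<And>m. J m = rec_rhs C q J m" and J': "\<And>m. J' m = rec_rhs C q J' m"
  shows "J = J'"
proof -
  have "J m N = J' m N" for m N
  proof (induction "sum N UNIV" arbitrary: m N rule: less_induct)
    case less
    have "J a (\<lambda>i. N i - a i) = J' a (\<lambda>i. N i - a i)" if "\<forall>i. a i \<le> N i" for a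
    proof (cases "a = (\<lambda>_. 0)")
      case True
      then show ?thesis using assms(1) by simp
    next
      case False
      then obtain i where "a i \<noteq> 0" by auto
      moreover have "a i \<le> N i" using that by blast
      ultimately have "sum (\<lambda>i. N i - a i) UNIV < sum N UNIV"
        by (intro sum_strict_mono_ex1) (auto intro!: exI[of _ i])
      then show ?thesis by (rule less)
    qed
    then show ?case
      by (subst J, subst J') (auto simp: rec_rhs_eq_sum_below intro!: sum.cong)
  qed
  then show ?thesis by (auto simp: fun_eq_iff)
qed

theorem proposition2p4:
  fixes C :: "'n::finite \<Rightarrow> 'n \<Rightarrow> real" and q :: real
  assumes symm: "\<And>i i'. C i i' = C i' i"
    and q: "0 < q" "q < 1"
  shows "(\<forall>m. Iser C q m = rec_rhs C q (Iser C q) m)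
         \<and> Iser C q (\<lambda>_. 0) = zone
         \<and> (\<forall>J. J (\<lambda>_. 0) = zone \<and> (\<forall>m. J m = rec_rhs C q J m) \<longrightarrow> J = Iser C q)"
proof (intro conjI allI impI)
  show rec: "Iser C q m = rec_rhs C q (Iser C q) m" for m
    by (simp add: fun_eq_iff Iser_coeff_eq_rec_rhs)
  show zero: "Iser C q (\<lambda>_. 0) = zone"
    using q by (simp add: Iser_zero)
  show "J = Iser C q" if "J (\<lambda>_. 0) = zone \<and> (\<forall>m. J m = rec_rhs C q J m)" for J
    using that zero rec by (intro rec_rhs_solution_unique[of J "Iser C q" C q]) auto
qed

end
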